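(* Let $\Gamma$ be a finite simplicial graph whose set $S$ of social vertices is non-empty, let $k=|S|$, $\Delta=\Gamma\setminus S$, and $n=|\Delta|$ (number of vertices). Let $\Phi_\Delta\le\mathrm{GL}(n,\mathbb{Z})$ be the image of $\mathrm{Aut}(A_\Delta)$ under the homomorphism induced by abelianising $A_\Delta$. Write matrices in $\mathrm{GL}(kn,\mathbb{Z})$ in $k\times k$ block form with $n\times n$ blocks, $M=(A_{ij})$. Let $Q\le\mathrm{GL}(kn,\mathbb{Z})$ be the subgroup $Q=G_1\times G_2$ where $G_1=\{(a_{ij}I_n)\mid (a_{ij})\in\mathrm{GL}(k,\mathbb{Z})\}$ and $G_2=\{\mathrm{Diag}(M,\dots,M)\mid M\in\Phi_\Delta\}$. Then the centraliser $C(Q)$ of $Q$ in $\mathrm{GL}(kn,\mathbb{Z})$ is a subgroup of $\{\mathrm{Diag}(M,\dots,M)\mid M\in\mathrm{GL}(n,\mathbb{Z})\}$.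
   Context: For a finite simplicial graph $\Gamma=(V,E)$, $A_\Gamma=\langle v\in V\mid [v,w]=1 \text{ for }(v,w)\in E\rangle$. A vertex is social if it is adjacent to every other vertex. $I_n$ is the $n\times n$ identity matrix, and $\mathrm{Diag}(D_1,\dots,D_k)$ denotes the block diagonal matrix with diagonal blocks $D_1,\dots,D_k$ and zero off-diagonal blocks. *)

theory Defs
  imports "Jordan_Normal_Form.Matrix" "HOL-Algebra.Group"
begin

text \<open>A finite simplicial graph: finite vertex set V, symmetric irreflexive
edge relation E (only its restriction to V matters).\<close>

definition simplicial_graph :: "'a set \<Rightarrow> ('a \<Rightarrow> 'a \<Rightarrow> bool) \<Rightarrow> bool" where
  "simplicial_graph V E \<longleftrightarrow> finite V \<and> (\<forall>x y. E x y \<longrightarrow> E y x) \<and> (\<forall>x. \<not> E x x)"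

definition social_vertices :: "'a set \<Rightarrow> ('a \<Rightarrow> 'a \<Rightarrow> bool) \<Rightarrow> 'a set" where
  "social_vertices V E = {v \<in> V. \<forall>w \<in> V. w \<noteq> v \<longrightarrow> E v w}"

text \<open>Words over generators and their inverses: (v, True) is v, (v, False) is v^-1.\<close>

type_synonym 'a letter = "'a \<times> bool"

inductive raag_step :: "('a \<Rightarrow> 'a \<Rightarrow> bool) \<Rightarrow> 'a letter list \<Rightarrow> 'a letter list \<Rightarrow> bool"
  for E where
  cancel: "raag_step E (u @ [(x, b), (x, \<not> b)] @ w) (u @ w)"
| commute: "E x y \<Longrightarrow> raag_step E (u @ [(x, b), (y, c)] @ w) (u @ [(y, c), (x, b)] @ w)"

definition raag_words :: "'a set \<Rightarrow> 'a letter list set" where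
  "raag_words V = {w. set w \<subseteq> V \<times> UNIV}"

definition raag_rel :: "'a set \<Rightarrow> ('a \<Rightarrow> 'a \<Rightarrow> bool) \<Rightarrow> ('a letter list \<times> 'a letter list) set" where
  "raag_rel V E = {(u, w). u \<in> raag_words V \<and> w \<in> raag_words V \<and>
      (\<lambda>a b. raag_step E a b \<or> raag_step E b a)\<^sup>*\<^sup>* u w}"

definition raag_class :: "'a set \<Rightarrow> ('a \<Rightarrow> 'a \<Rightarrow> bool) \<Rightarrow> 'a letter list \<Rightarrow> 'a letter list set" where
  "raag_class V E w = raag_rel V E `` {w}"

definition raag :: "'a set \<Rightarrow> ('a \<Rightarrow> 'a \<Rightarrow> bool) \<Rightarrow> 'a letter list set monoid" where
  "raag V E = \<lparr> carrier = raag_words V // raag_rel V E,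
      mult = (\<lambda>A B. \<Union>a\<in>A. \<Union>b\<in>B. raag_class V E (a @ b)),
      one = raag_class V E [] \<rparr>"

definition exp_sum :: "'a \<Rightarrow> 'a letter list \<Rightarrow> int" where
  "exp_sum v w = int (count_list w (v, True)) - int (count_list w (v, False))"

text \<open>Matrix of the automorphism of the abelianisation (= Z^n, basis the images of the
vertices e 0, ..., e (n-1)) induced by phi: column j is the image of generator e j.\<close>

definition ab_matrix :: "'a set \<Rightarrow> ('a \<Rightarrow> 'a \<Rightarrow> bool) \<Rightarrow> (nat \<Rightarrow> 'a) \<Rightarrow> nat
    \<Rightarrow> ('a letter list set \<Rightarrow> 'a letter list set) \<Rightarrow> int mat" where
  "ab_matrix V E e n \<phi> = mat n n (\<lambda>(i, j).
      exp_sum (e i) (SOME w. w \<in> \<phi> (raag_class V E [(e j, True)])))"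

definition Phi :: "'a set \<Rightarrow> ('a \<Rightarrow> 'a \<Rightarrow> bool) \<Rightarrow> (nat \<Rightarrow> 'a) \<Rightarrow> nat \<Rightarrow> int mat set" where
  "Phi V E e n = ab_matrix V E e n ` iso (raag V E) (raag V E)"

definition GL_int :: "nat \<Rightarrow> int mat set" where
  "GL_int m = {M \<in> carrier_mat m m. \<exists>N \<in> carrier_mat m m. M * N = 1\<^sub>m m \<and> N * M = 1\<^sub>m m}"

text \<open>(a_ij I_n) in k x k block form with n x n blocks.\<close>

definition scalar_blocks :: "nat \<Rightarrow> int mat \<Rightarrow> int mat" where
  "scalar_blocks n A = mat (dim_row A * n) (dim_col A * n)
      (\<lambda>(r, c). if r mod n = c mod n then A $$ (r div n, c div n) else 0)"

text \<open>Diag(M, ..., M) with k diagonal blocks.\<close>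

definition diag_blocks :: "nat \<Rightarrow> int mat \<Rightarrow> int mat" where
  "diag_blocks k M = mat (k * dim_row M) (k * dim_col M)
      (\<lambda>(r, c). if r div dim_row M = c div dim_col M
                then M $$ (r mod dim_row M, c mod dim_col M) else 0)"

definition centraliser :: "nat \<Rightarrow> int mat set \<Rightarrow> int mat set" where
  "centraliser m Q = {C \<in> GL_int m. \<forall>q \<in> Q. C * q = q * C}"

end

theory Submission
  imports Defs "Jordan_Normal_Form.Gauss_Jordan_Elimination"
begin

(* Write scalar_blocks n A = A \<otimes> I_n. Since the identity lies in Phi, the group Q contains
   E \<otimes> I_n for every elementary matrix E = I + e_pq (p \<noteq> q) of GL(k, Z). Comparing the entries of
   C (E \<otimes> I_n) and (E \<otimes> I_n) C shows that a matrix commuting with all of them is Diag(M, ..., M),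
   M its upper left n \<times> n block. The inverse of a centralising C commutes with the same matrices,
   hence is Diag(N, ..., N); as Diag is multiplicative and injective, M N = N M = I_n. *)

lemma div_mod_eq_iff:
  fixes l m n p :: nat
  assumes "m < n"
  shows "(l div n = p \<and> l mod n = m) \<longleftrightarrow> l = p * n + m"
proof
  show "l div n = p \<and> l mod n = m \<Longrightarrow> l = p * n + m"
    using div_mult_mod_eq[of l n] by simp
  show "l = p * n + m \<Longrightarrow> l div n = p \<and> l mod n = m"
    using assms by simp
qed

lemma block_index_less: "p < k \<Longrightarrow> m < n \<Longrightarrow> p * n + m < k * (n :: nat)"
proof -
  assume "p < k" "m < n"
  then have "p * n + m < Suc p * n" by simp
  also have "\<dots> \<le> k * n" using \<open>p < k\<close> by (intro mult_le_mono1) simp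
  finally show ?thesis .
qed

lemma raag_step_exp_sum: "raag_step E u w \<Longrightarrow> exp_sum v u = exp_sum v w"
  by (induction rule: raag_step.induct) (auto simp: exp_sum_def)

lemma raag_rel_exp_sum: "(u, w) \<in> raag_rel V E \<Longrightarrow> exp_sum v u = exp_sum v w"
  unfolding raag_rel_def
  by (auto elim!: rtranclp_induct dest: raag_step_exp_sum[where v = v])

lemma ab_matrix_id:
  assumes "inj_on e {..<n}" "e ` {..<n} \<subseteq> V"
  shows "ab_matrix V E e n (\<lambda>x. x) = 1\<^sub>m n"
proof (rule eq_matI)
  fix i j assume "i < dim_row (1\<^sub>m n)" "j < dim_col (1\<^sub>m n)"
  then have ij: "i < n" "j < n" by auto
  define w where "w = (SOME w. w \<in> raag_class V E [(e j, True)])"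
  have "[(e j, True)] \<in> raag_class V E [(e j, True)]"
    using ij assms by (auto simp: raag_class_def raag_rel_def raag_words_def)
  then have "w \<in> raag_class V E [(e j, True)]"
    unfolding w_def by (rule someI)
  then have "exp_sum (e i) w = exp_sum (e i) [(e j, True)]"
    by (auto simp: raag_class_def dest: raag_rel_exp_sum[where v = "e i"])
  also have "\<dots> = (if i = j then 1 else 0)"
    using ij assms(1) by (auto simp: exp_sum_def inj_on_def)
  finally show "ab_matrix V E e n (\<lambda>x. x) $$ (i, j) = 1\<^sub>m n $$ (i, j)"
    using ij by (simp add: ab_matrix_def w_def)
qed (auto simp: ab_matrix_def)

lemma one_mat_in_Phi:
  assumes "inj_on e {..<n}" "e ` {..<n} \<subseteq> V"
  shows "1\<^sub>m n \<in> Phi V E e n"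
  unfolding Phi_def using ab_matrix_id[OF assms] iso_set_refl
  by (metis image_eqI)

lemma index_diag_blocks:
  assumes "M \<in> carrier_mat n n" "r < k * n" "c < k * n"
  shows "diag_blocks k M $$ (r, c) = (if r div n = c div n then M $$ (r mod n, c mod n) else 0)"
  using assms by (simp add: diag_blocks_def)

lemma diag_blocks_mult:
  assumes M: "M \<in> carrier_mat n n" and N: "N \<in> carrier_mat n n"
  shows "diag_blocks k M * diag_blocks k N = diag_blocks k (M * N)"
proof (rule eq_matI)
  fix r c assume "r < dim_row (diag_blocks k (M * N))" "c < dim_col (diag_blocks k (M * N))"
  with M N have rc: "r < k * n" "c < k * n" by (auto simp: diag_blocks_def)
  then have "0 < n" by (cases n) auto
  define b where "b = r div n"
  have "b < k" using rc by (simp add: b_def less_mult_imp_div_less)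
  then have "b * n + n \<le> k * n" by (metis Suc_leI mult_Suc mult_le_mono1 add.commute)
  then have block: "{b * n ..< b * n + n} \<subseteq> {0 ..< k * n}" by auto
  have "(diag_blocks k M * diag_blocks k N) $$ (r, c)
      = (\<Sum>l\<in>{0 ..< k * n}. diag_blocks k M $$ (r, l) * diag_blocks k N $$ (l, c))"
    using rc M N by (simp add: diag_blocks_def scalar_prod_def)
  also have "\<dots> = (\<Sum>l\<in>{b * n ..< b * n + n}. diag_blocks k M $$ (r, l) * diag_blocks k N $$ (l, c))"
  proof (rule sum.mono_neutral_right[OF _ block])
    show "\<forall>l\<in>{0 ..< k * n} - {b * n ..< b * n + n}. diag_blocks k M $$ (r, l) * diag_blocks k N $$ (l, c) = 0"
    proof
      fix l assume l: "l \<in> {0 ..< k * n} - {b * n ..< b * n + n}"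
      have "l div n * n \<le> l" "l < l div n * n + n"
        using div_mult_mod_eq[of l n] mod_less_divisor[OF \<open>0 < n\<close>, of l] by linarith+
      with l have "l div n \<noteq> b" by auto
      then show "diag_blocks k M $$ (r, l) * diag_blocks k N $$ (l, c) = 0"
        using l rc M by (simp add: index_diag_blocks b_def)
    qed
  qed simp
  also have "\<dots> = (\<Sum>j\<in>{0 ..< n}. diag_blocks k M $$ (r, j + b * n) * diag_blocks k N $$ (j + b * n, c))"
    using sum.shift_bounds_nat_ivl[of _ 0 "b * n" n] by (simp add: add.commute)
  also have "\<dots> = (if b = c div n then (\<Sum>j\<in>{0 ..< n}. M $$ (r mod n, j) * N $$ (j, c mod n)) else 0)"
    using block rc M N by (auto simp: index_diag_blocks b_def intro!: sum.cong)
  also have "\<dots> = diag_blocks k (M * N) $$ (r, c)"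
    using rc M N \<open>0 < n\<close>
    by (simp add: index_diag_blocks[OF mult_carrier_mat[OF M N]] b_def scalar_prod_def)
  finally show "(diag_blocks k M * diag_blocks k N) $$ (r, c) = diag_blocks k (M * N) $$ (r, c)" .
qed (use M N in \<open>auto simp: diag_blocks_def\<close>)

lemma diag_blocks_one_mat: "diag_blocks k (1\<^sub>m n) = 1\<^sub>m (k * n)"
proof (rule eq_matI)
  fix r c assume "r < dim_row (1\<^sub>m (k * n))" "c < dim_col (1\<^sub>m (k * n))"
  then have "r < k * n" "c < k * n" "0 < n" by (auto intro: gr0I)
  moreover have "(r div n = c div n \<and> r mod n = c mod n) = (r = c)"
    by (metis div_mult_mod_eq)
  ultimately show "diag_blocks k (1\<^sub>m n) $$ (r, c) = 1\<^sub>m (k * n) $$ (r, c)"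
    by (auto simp: index_diag_blocks[OF one_carrier_mat])
qed (auto simp: diag_blocks_def)

lemma diag_blocks_inj:
  assumes "0 < k" "M \<in> carrier_mat n n" "N \<in> carrier_mat n n" "diag_blocks k M = diag_blocks k N"
  shows "M = N"
proof (rule eq_matI)
  fix i j assume "i < dim_row N" "j < dim_col N"
  then have ij: "i < n" "j < n" "i < k * n" "j < k * n"
    using assms(1,3) by (auto intro: less_le_trans[of _ n] simp: Suc_le_eq)
  show "M $$ (i, j) = N $$ (i, j)"
    using arg_cong[OF assms(4), of "\<lambda>A. A $$ (i, j)"] ij assms(2,3) by (simp add: index_diag_blocks)
qed (use assms(2,3) in auto)

lemma inverse_mat_commute:
  fixes A C D :: "'a :: semiring_1 mat"
  assumes C: "C \<in> carrier_mat m m" and D: "D \<in> carrier_mat m m" and A: "A \<in> carrier_mat m m"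
    and CD: "C * D = 1\<^sub>m m" and DC: "D * C = 1\<^sub>m m" and CA: "C * A = A * C"
  shows "D * A = A * D"
proof -
  have "D * A = D * A * (C * D)" using A D CD by simp
  also have "\<dots> = D * (A * C) * D"
    using assoc_mult_mat[OF mult_carrier_mat[OF D A] C D] assoc_mult_mat[OF D A C] by simp
  also have "\<dots> = (D * C) * A * D" using assoc_mult_mat[OF D C A] CA by simp
  finally show ?thesis using A D DC by simp
qed

lemma scalar_blocks_carrier: "A \<in> carrier_mat k k \<Longrightarrow> scalar_blocks n A \<in> carrier_mat (k * n) (k * n)"
  by (simp add: scalar_blocks_def)

lemma addrow_mat_in_GL_int:
  assumes "p < k" "q < k" "p \<noteq> q"
  shows "addrow_mat k (a :: int) p q \<in> GL_int k"
  unfolding GL_int_def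
  using addrow_mat_inv[OF assms, of a] addrow_mat_inv[OF assms, of "-a"] by auto

lemma index_scalar_blocks_addrow_mat:
  assumes "p \<noteq> q" "l < k * n" "c < k * n"
  shows "scalar_blocks n (addrow_mat k 1 p q) $$ (l, c)
    = (if l = c then 1 else 0) + (if l div n = p \<and> c div n = q \<and> l mod n = c mod n then 1 else 0)"
proof -
  have "l div n < k" "c div n < k" using assms by (auto simp: less_mult_imp_div_less)
  moreover have "(l mod n = c mod n \<and> l div n = c div n) = (l = c)"
    by (metis div_mult_mod_eq)
  ultimately show ?thesis
    using assms by (auto simp: scalar_blocks_def)
qed

lemma mult_scalar_blocks_addrow_mat_right:
  assumes C: "C \<in> carrier_mat (k * n) (k * n)" and pq: "p < k" "q < k" "p \<noteq> q"
    and rc: "r < k * n" "c < k * n"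
  shows "(C * scalar_blocks n (addrow_mat k 1 p q)) $$ (r, c)
      = C $$ (r, c) + (if c div n = q then C $$ (r, p * n + c mod n) else 0)"
proof -
  have "0 < n" using rc by (auto intro: gr0I)
  have S: "scalar_blocks n (addrow_mat k 1 p q) \<in> carrier_mat (k * n) (k * n)"
    by (rule scalar_blocks_carrier[OF addrow_mat_carrier])
  have "(C * scalar_blocks n (addrow_mat k 1 p q)) $$ (r, c)
      = (\<Sum>l\<in>{0..<k * n}. C $$ (r, l) * scalar_blocks n (addrow_mat k 1 p q) $$ (l, c))"
    using C S rc by (simp add: scalar_prod_def)
  also have "\<dots> = (\<Sum>l\<in>{0..<k * n}. (if l = c then C $$ (r, l) else 0)
      + (if c div n = q \<and> l = p * n + c mod n then C $$ (r, l) else 0))"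
  proof (rule sum.cong[OF refl])
    fix l assume "l \<in> {0..<k * n}"
    moreover have "(l div n = p \<and> c div n = q \<and> l mod n = c mod n) \<longleftrightarrow> c div n = q \<and> l = p * n + c mod n"
      using div_mod_eq_iff[OF mod_less_divisor[OF \<open>0 < n\<close>], of l p c] by blast
    ultimately show "C $$ (r, l) * scalar_blocks n (addrow_mat k 1 p q) $$ (l, c) = (if l = c then C $$ (r, l) else 0)
        + (if c div n = q \<and> l = p * n + c mod n then C $$ (r, l) else 0)"
      using pq rc by (simp add: index_scalar_blocks_addrow_mat distrib_left)
  qed
  also have "\<dots> = C $$ (r, c) + (if c div n = q then C $$ (r, p * n + c mod n) else 0)"
    using pq rc \<open>0 < n\<close> block_index_less[of p k "c mod n" n] by (simp add: sum.distrib)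
  finally show ?thesis .
qed

lemma mult_scalar_blocks_addrow_mat_left:
  assumes C: "C \<in> carrier_mat (k * n) (k * n)" and pq: "p < k" "q < k" "p \<noteq> q"
    and rc: "r < k * n" "c < k * n"
  shows "(scalar_blocks n (addrow_mat k 1 p q) * C) $$ (r, c)
      = C $$ (r, c) + (if r div n = p then C $$ (q * n + r mod n, c) else 0)"
proof -
  have "0 < n" using rc by (auto intro: gr0I)
  have S: "scalar_blocks n (addrow_mat k 1 p q) \<in> carrier_mat (k * n) (k * n)"
    by (rule scalar_blocks_carrier[OF addrow_mat_carrier])
  have "(scalar_blocks n (addrow_mat k 1 p q) * C) $$ (r, c)
      = (\<Sum>l\<in>{0..<k * n}. scalar_blocks n (addrow_mat k 1 p q) $$ (r, l) * C $$ (l, c))"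
    using C S rc by (simp add: scalar_prod_def)
  also have "\<dots> = (\<Sum>l\<in>{0..<k * n}. (if l = r then C $$ (l, c) else 0)
      + (if r div n = p \<and> l = q * n + r mod n then C $$ (l, c) else 0))"
  proof (rule sum.cong[OF refl])
    fix l assume "l \<in> {0..<k * n}"
    moreover have "(r div n = p \<and> l div n = q \<and> r mod n = l mod n) \<longleftrightarrow> r div n = p \<and> l = q * n + r mod n"
      using div_mod_eq_iff[OF mod_less_divisor[OF \<open>0 < n\<close>], of l q r] by auto
    ultimately show "scalar_blocks n (addrow_mat k 1 p q) $$ (r, l) * C $$ (l, c) = (if l = r then C $$ (l, c) else 0)
        + (if r div n = p \<and> l = q * n + r mod n then C $$ (l, c) else 0)"
      using pq rc by (auto simp: index_scalar_blocks_addrow_mat distrib_right)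
  qed
  also have "\<dots> = C $$ (r, c) + (if r div n = p then C $$ (q * n + r mod n, c) else 0)"
    using pq rc \<open>0 < n\<close> block_index_less[of q k "r mod n" n] by (simp add: sum.distrib)
  finally show ?thesis .
qed

lemma commute_scalar_blocks_addrow_mat:
  assumes C: "C \<in> carrier_mat (k * n) (k * n)" and pq: "p < k" "q < k" "p \<noteq> q"
    and rc: "r < k * n" "c < k * n"
    and comm: "C * scalar_blocks n (addrow_mat k 1 p q) = scalar_blocks n (addrow_mat k 1 p q) * C"
  shows "(if c div n = q then C $$ (r, p * n + c mod n) else 0)
      = (if r div n = p then C $$ (q * n + r mod n, c) else 0)"
  using mult_scalar_blocks_addrow_mat_right[OF C pq rc] mult_scalar_blocks_addrow_mat_left[OF C pq rc] comm
  by simp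

lemma commute_scalar_blocks_addrow_mat_imp_diag_blocks:
  assumes C: "C \<in> carrier_mat (k * n) (k * n)"
    and comm: "\<And>p q. p < k \<Longrightarrow> q < k \<Longrightarrow> p \<noteq> q \<Longrightarrow>
      C * scalar_blocks n (addrow_mat k 1 p q) = scalar_blocks n (addrow_mat k 1 p q) * C"
  shows "\<exists>M \<in> carrier_mat n n. C = diag_blocks k M"
proof
  let ?M = "mat n n (\<lambda>(i, j). C $$ (i, j))"
  show "?M \<in> carrier_mat n n" by simp
  show "C = diag_blocks k ?M"
  proof (rule eq_matI)
    fix r c assume "r < dim_row (diag_blocks k ?M)" "c < dim_col (diag_blocks k ?M)"
    then have rc: "r < k * n" "c < k * n" by (auto simp: diag_blocks_def)
    then have "0 < n" by (auto intro: gr0I)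
    have blocks: "r div n < k" "c div n < k" using rc by (auto simp: less_mult_imp_div_less)
    show "C $$ (r, c) = diag_blocks k ?M $$ (r, c)"
    proof (cases "r div n = c div n")
      case True
      have "C $$ (r mod n, c mod n) = C $$ (r, c)"
      proof (cases "c div n = 0")
        case True
        with \<open>r div n = c div n\<close> \<open>0 < n\<close> show ?thesis by (simp add: div_eq_0_iff)
      next
        case False
        have "r mod n < k * n" using rc by (meson le_less_trans mod_less_eq_dividend)
        from commute_scalar_blocks_addrow_mat[OF C _ blocks(2) False[symmetric] this rc(2)]
        have "C $$ (r mod n, c mod n) = C $$ (c div n * n + r mod n, c)"
          using comm blocks False \<open>0 < n\<close> by simp
        also have "c div n * n + r mod n = r" using True div_mult_mod_eq[of r n] by simp
        finally show ?thesis .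
      qed
      with True rc \<open>0 < n\<close> show ?thesis by (simp add: diag_blocks_def)
    next
      case False
      \<comment> \<open>Move column c to block r div n: the commutation relation then reads C(r, c) = 0.\<close>
      have "r div n * n + c mod n < k * n"
        using blocks \<open>0 < n\<close> by (simp add: block_index_less)
      from commute_scalar_blocks_addrow_mat[OF C blocks(2,1) False[symmetric] rc(1) this]
      have "C $$ (r, c div n * n + c mod n) = 0"
        using comm blocks False \<open>0 < n\<close> by simp
      with False rc show ?thesis by (simp add: diag_blocks_def)
    qed
  qed (use C in \<open>auto simp: diag_blocks_def\<close>)
qed

theorem mainTheorem5:
  fixes V :: "'a set" and E :: "'a \<Rightarrow> 'a \<Rightarrow> bool" and e :: "nat \<Rightarrow> 'a"
  assumes "simplicial_graph V E"
    and "social_vertices V E \<noteq> {}"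
    and "k = card (social_vertices V E)"
    and "n = card (V - social_vertices V E)"
    and "bij_betw e {..<n} (V - social_vertices V E)"
    and "G1 = {scalar_blocks n A | A. A \<in> GL_int k}"
    and "G2 = {diag_blocks k M | M. M \<in> Phi (V - social_vertices V E) E e n}"
    and "Q = {g1 * g2 | g1 g2. g1 \<in> G1 \<and> g2 \<in> G2}"
  shows "centraliser (k * n) Q \<subseteq> {diag_blocks k M | M. M \<in> GL_int n}"
proof
  fix C assume "C \<in> centraliser (k * n) Q"
  then obtain D where C: "C \<in> carrier_mat (k * n) (k * n)" and D: "D \<in> carrier_mat (k * n) (k * n)"
    and CD: "C * D = 1\<^sub>m (k * n)" and DC: "D * C = 1\<^sub>m (k * n)" and CQ: "\<And>q. q \<in> Q \<Longrightarrow> C * q = q * C"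
    unfolding centraliser_def GL_int_def by auto
  have "0 < k"
    using assms(1-3) by (auto simp: simplicial_graph_def social_vertices_def card_gt_0_iff)
  have "1\<^sub>m n \<in> Phi (V - social_vertices V E) E e n"
    using one_mat_in_Phi assms(5) unfolding bij_betw_def by blast
  then have one_in_G2: "1\<^sub>m (k * n) \<in> G2"
    using assms(7) diag_blocks_one_mat by (metis (mono_tags, lifting) mem_Collect_eq)
  have elementary_in_Q: "scalar_blocks n (addrow_mat k 1 p q) \<in> Q" if "p < k" "q < k" "p \<noteq> q" for p q
  proof -
    have "scalar_blocks n (addrow_mat k 1 p q) \<in> G1"
      using addrow_mat_in_GL_int[OF that] assms(6) by blast
    moreover have "scalar_blocks n (addrow_mat k 1 p q) = scalar_blocks n (addrow_mat k 1 p q) * 1\<^sub>m (k * n)"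
      using right_mult_one_mat[OF scalar_blocks_carrier[OF addrow_mat_carrier]] by simp
    ultimately show ?thesis using one_in_G2 assms(8) by blast
  qed
  obtain M where M: "M \<in> carrier_mat n n" "C = diag_blocks k M"
    using commute_scalar_blocks_addrow_mat_imp_diag_blocks[OF C] CQ elementary_in_Q by blast
  obtain N where N: "N \<in> carrier_mat n n" "D = diag_blocks k N"
    using commute_scalar_blocks_addrow_mat_imp_diag_blocks[OF D]
      inverse_mat_commute[OF C D scalar_blocks_carrier[OF addrow_mat_carrier] CD DC] CQ elementary_in_Q
    by blast
  have "diag_blocks k (M * N) = diag_blocks k (1\<^sub>m n)" "diag_blocks k (N * M) = diag_blocks k (1\<^sub>m n)"
    using CD DC M N by (simp_all add: diag_blocks_mult diag_blocks_one_mat)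
  then have "M * N = 1\<^sub>m n" "N * M = 1\<^sub>m n"
    using diag_blocks_inj[OF \<open>0 < k\<close> mult_carrier_mat one_carrier_mat] M N by blast+
  with M N show "C \<in> {diag_blocks k M | M. M \<in> GL_int n}"
    unfolding GL_int_def by blast
qed

end
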